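(* Let $p$ be an odd prime and $\lambda$ a nonempty BG-partition. The following are equivalent: (1) $\varepsilon^*_\lambda=0$; (2) $a^*_\lambda$ is even; (3) $\mathrm{Rim}^*_p(\lambda)$ contains no diagonal node $(i,i)$; (4) $p\mid a^*_\lambda$.
   Context: Partitions: $\lambda=(\lambda_1\ge\lambda_2\ge\cdots)$ with finitely many nonzero parts; $l(\lambda)$ = number of nonzero parts; Young diagram $[\lambda]=\{(i,j): i\ge1, 1\le j\le\lambda_i\}$ ($i$ = row, increasing downward). $\lambda'$ is the conjugate; self-conjugate means $\lambda=\lambda'$. $k(\lambda)=\max\{i:\lambda_i\ge i\}$; diagonal nodes are $(i,i)$, $1\le i\le k(\lambda)$; hook length $h_{ij}=\lambda_i+\lambda'_j-i-j+1$. A BG-partition is a self-conjugate partition with $p\nmid h_{ii}$ for all $1\le i\le k(\lambda)$. Rim and $p$-rim: the rim is the set of nodes $(i,j)\in[\lambda]$ with $(i+1,j+1)\notin[\lambda]$. Label rim nodes $1,2,\dots$ along the rim path from $(1,\lambda_1)$ to $(l(\lambda),1)$. The first $p$-segment is the rim nodes labelled $1,\dots,p$ (or all if fewer). If the last node $(i,j)$ of a $p$-segment lies in the last row, stop; otherwise with $l$ the smallest label in row $i+1$ the next $p$-segment is the rim nodes labelled $l,\dots,l+p-1$ (or up to the last). The $p$-rim is the union of the $p$-segments. $p$-rim*: $U_\lambda=\{(i,j)\in p\text{-rim of }\lambda: i\le j\}$, $L_\lambda=\{(j,i):(i,j)\in U_\lambda\}$, $\mathrm{Rim}^*_p(\lambda)=U_\lambda\cup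 L_\lambda$, $a^*_\lambda=\#\mathrm{Rim}^*_p(\lambda)$, $\varepsilon^*_\lambda=a^*_\lambda\bmod 2$. *)

theory Defs
  imports "HOL-Computational_Algebra.Primes"
begin

text \<open>A partition is a weakly decreasing list of positive naturals;
  part lam i is lambda_i (1-indexed, 0 beyond the length).\<close>

definition is_partition :: "nat list \<Rightarrow> bool" where
  "is_partition lam \<longleftrightarrow> sorted_wrt (\<ge>) lam \<and> 0 \<notin> set lam"

definition part :: "nat list \<Rightarrow> nat \<Rightarrow> nat" where
  "part lam i = (if 1 \<le> i \<and> i \<le> length lam then lam ! (i - 1) else 0)"

definition len :: "nat list \<Rightarrow> nat" where
  "len lam = card {i. 1 \<le> i \<and> part lam i \<noteq> 0}"

definition diagram :: "nat list \<Rightarrow> (nat \<times> nat) set" where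
  "diagram lam = {(i, j). 1 \<le> i \<and> 1 \<le> j \<and> j \<le> part lam i}"

definition conj_part :: "nat list \<Rightarrow> nat \<Rightarrow> nat" where
  "conj_part lam j = card {i. 1 \<le> i \<and> j \<le> part lam i}"

definition self_conjugate :: "nat list \<Rightarrow> bool" where
  "self_conjugate lam \<longleftrightarrow> (\<forall>j\<ge>1. conj_part lam j = part lam j)"

definition kdiag :: "nat list \<Rightarrow> nat" where
  "kdiag lam = Max {i. 1 \<le> i \<and> i \<le> part lam i}"

definition hook :: "nat list \<Rightarrow> nat \<Rightarrow> nat \<Rightarrow> int" where
  "hook lam i j = int (part lam i) + int (conj_part lam j) - int i - int j + 1"

definition BG_partition :: "nat \<Rightarrow> nat list \<Rightarrow> bool" where
  "BG_partition p lam \<longleftrightarrow> is_partition lam \<and> self_conjugate lam \<and>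
     (\<forall>i. 1 \<le> i \<and> i \<le> kdiag lam \<longrightarrow> \<not> int p dvd hook lam i i)"

definition rim :: "nat list \<Rightarrow> (nat \<times> nat) set" where
  "rim lam = {(i, j) \<in> diagram lam. (i + 1, j + 1) \<notin> diagram lam}"

text \<open>Order of the rim path from (1, lambda_1) to (l, 1): down the rows,
  and right-to-left within a row.\<close>
definition path_before :: "nat \<times> nat \<Rightarrow> nat \<times> nat \<Rightarrow> bool" where
  "path_before a b \<longleftrightarrow> fst a < fst b \<or> (fst a = fst b \<and> snd a > snd b)"

definition rim_list :: "nat list \<Rightarrow> (nat \<times> nat) list" where
  "rim_list lam = (THE L. distinct L \<and> set L = rim lam \<and> sorted_wrt path_before L)"

text \<open>Rim node with label m (labels start at 1).\<close>
definition rim_node :: "nat list \<Rightarrow> nat \<Rightarrow> nat \<times> nat" where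
  "rim_node lam m = rim_list lam ! (m - 1)"

definition rim_size :: "nat list \<Rightarrow> nat" where
  "rim_size lam = length (rim_list lam)"

text \<open>Label of the last node of the p-segment starting at label s.\<close>
definition seg_end :: "nat \<Rightarrow> nat list \<Rightarrow> nat \<Rightarrow> nat" where
  "seg_end p lam s = min (s + p - 1) (rim_size lam)"

inductive seg_start :: "nat \<Rightarrow> nat list \<Rightarrow> nat \<Rightarrow> bool" for p lam where
  first: "rim_size lam \<ge> 1 \<Longrightarrow> seg_start p lam 1"
| step: "seg_start p lam s \<Longrightarrow> fst (rim_node lam (seg_end p lam s)) < len lam \<Longrightarrow>
         seg_start p lam (LEAST m. 1 \<le> m \<and> m \<le> rim_size lam \<and>
            fst (rim_node lam m) = fst (rim_node lam (seg_end p lam s)) + 1)"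

definition p_rim :: "nat \<Rightarrow> nat list \<Rightarrow> (nat \<times> nat) set" where
  "p_rim p lam = {rim_node lam m | m. \<exists>s. seg_start p lam s \<and> s \<le> m \<and> m \<le> seg_end p lam s}"

definition U_set :: "nat \<Rightarrow> nat list \<Rightarrow> (nat \<times> nat) set" where
  "U_set p lam = {(i, j) \<in> p_rim p lam. i \<le> j}"

definition L_set :: "nat \<Rightarrow> nat list \<Rightarrow> (nat \<times> nat) set" where
  "L_set p lam = {(j, i) | i j. (i, j) \<in> U_set p lam}"

definition rim_star :: "nat \<Rightarrow> nat list \<Rightarrow> (nat \<times> nat) set" where
  "rim_star p lam = U_set p lam \<union> L_set p lam"

definition a_star :: "nat \<Rightarrow> nat list \<Rightarrow> nat" where
  "a_star p lam = card (rim_star p lam)"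

definition eps_star :: "nat \<Rightarrow> nat list \<Rightarrow> nat" where
  "eps_star p lam = a_star p lam mod 2"

end

theory Submission
  imports Defs
begin

text \<open>Number the rim nodes (i, j) along the rim path by lambda_1 + i - j. Then the nodes with
  i \<le> j are those with label at most lambda_1, and the only diagonal rim node has label lambda_1.
  The p-segments are disjoint label intervals, each starting at the head of a row and, except
  possibly the last one, of length p. If no segment covers lambda_1, the upper half U of
  Rim*_p is a union of full segments, so a* = 2|U| is even and divisible by p. Otherwise the
  diagonal node is the only common node of U and its mirror image, so a* = 2|U| - 1 is odd;
  and if the segment through it starts at row i, then |U| = lambda_i - i + 1 (mod p), whence
  a* = 2 lambda_i - 2i + 1 = h_ii (mod p), which p does not divide.\<close>

section \<open>Disjoint intervals of labels\<close>

lemma card_segments_upto_mod: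
  fixes S :: "nat set" and e :: "nat \<Rightarrow> nat"
  assumes disjoint: "\<And>s t. s \<in> S \<Longrightarrow> t \<in> S \<Longrightarrow> s < t \<Longrightarrow> e s < t"
    and full: "\<And>s. s \<in> S \<Longrightarrow> e s < N \<Longrightarrow> e s + 1 - s = p"
    and "x \<le> N"
  shows "(\<forall>s\<in>S. s \<le> x \<longrightarrow> x \<le> e s \<longrightarrow>
            card ((\<Union>s\<in>S. {s..e s}) \<inter> {..x}) mod p = (x + 1 - s) mod p)
       \<and> ((\<forall>s\<in>S. \<not> (s \<le> x \<and> x \<le> e s)) \<longrightarrow>
            card ((\<Union>s\<in>S. {s..e s}) \<inter> {..x}) mod p = 0)"
  using \<open>x \<le> N\<close>
proof (induction x)
  case 0
  have "(\<Union>s\<in>S. {s..e s}) \<inter> {..0} = (if \<exists>s\<in>S. s \<le> 0 \<and> 0 \<le> e s then {0} else {})"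
    by auto
  then show ?case by auto
next
  case (Suc x)
  let ?M = "\<Union>s\<in>S. {s..e s}"
  let ?c = "\<lambda>y. card (?M \<inter> {..y})"
  have IH_in: "?c x mod p = (x + 1 - t) mod p" if "t \<in> S" "t \<le> x" "x \<le> e t" for t
    using Suc that by auto
  have IH_out: "?c x mod p = 0" if "\<forall>t\<in>S. \<not> (t \<le> x \<and> x \<le> e t)"
    using Suc that by auto
  have card_Suc: "?c (Suc x) = ?c x + (if Suc x \<in> ?M then 1 else 0)"
    by (simp add: atMost_Suc Int_insert_right card_insert_if)
  \<comment> \<open>If x is covered only as the end of a segment, that segment is full.\<close>
  have ends_at_x: "?c x mod p = 0" if ends: "\<forall>t\<in>S. t \<le> x \<longrightarrow> x \<le> e t \<longrightarrow> e t = x"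
  proof (cases "\<exists>t\<in>S. t \<le> x \<and> x \<le> e t")
    case True
    then obtain t where t: "t \<in> S" "t \<le> x" "x \<le> e t" by blast
    then have "e t = x" using ends by blast
    then have "x + 1 - t = p" using full[OF t(1)] Suc.prems by simp
    then show ?thesis using IH_in[OF t] by simp
  qed (use IH_out in blast)
  show ?case
  proof (intro conjI ballI impI)
    fix s assume s: "s \<in> S" "s \<le> Suc x" "Suc x \<le> e s"
    then have card_s: "?c (Suc x) = ?c x + 1" using card_Suc by auto
    show "?c (Suc x) mod p = (Suc x + 1 - s) mod p"
    proof (cases "s \<le> x")
      case True
      then have "?c x mod p = (x + 1 - s) mod p" using IH_in[of s] s by simp
      then have "Suc (?c x) mod p = Suc (x + 1 - s) mod p" by (metis mod_Suc_eq)
      then show ?thesis using True card_s by (simp add: Suc_diff_le)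
    next
      case False
      then have "s = Suc x" using s by simp
      have "?c x mod p = 0"
      proof (rule ends_at_x, intro ballI impI)
        fix t assume t: "t \<in> S" "t \<le> x" "x \<le> e t"
        then have "e t < Suc x" using disjoint[of t s] s \<open>s = Suc x\<close> by simp
        then show "e t = x" using t(3) by simp
      qed
      then have "Suc (?c x) mod p = Suc 0 mod p" by (metis mod_Suc_eq)
      then show ?thesis using card_s \<open>s = Suc x\<close> by simp
    qed
  next
    assume uncovered: "\<forall>s\<in>S. \<not> (s \<le> Suc x \<and> Suc x \<le> e s)"
    then have "Suc x \<notin> ?M" by auto
    moreover have "?c x mod p = 0"
    proof (rule ends_at_x, intro ballI impI)
      fix t assume t: "t \<in> S" "t \<le> x" "x \<le> e t"
      then show "e t = x" using uncovered by (auto simp: le_Suc_eq)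
    qed
    ultimately show "?c (Suc x) mod p = 0" using card_Suc by (simp only: if_False add_0_right)
  qed
qed

section \<open>Partitions and their rims\<close>

lemma part_eq_0: "length lam < i \<Longrightarrow> part lam i = 0"
  by (simp add: part_def)

lemma part_pos:
  assumes "is_partition lam" "1 \<le> i" "i \<le> length lam"
  shows "0 < part lam i"
proof -
  have "lam ! (i - 1) \<in> set lam" using assms(2,3) by simp
  then have "lam ! (i - 1) \<noteq> 0" using assms(1) by (metis is_partition_def)
  then show ?thesis using assms(2,3) by (simp add: part_def)
qed

lemma part_antimono:
  assumes "is_partition lam" "1 \<le> i" "i \<le> i'"
  shows "part lam i' \<le> part lam i"
proof (cases "i' \<le> length lam \<and> i < i'")
  case True
  have "sorted_wrt (\<ge>) lam" using assms(1) by (simp add: is_partition_def)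
  then have "lam ! (i' - 1) \<le> lam ! (i - 1)"
    using assms(2) True by (auto simp: sorted_wrt_iff_nth_less)
  then show ?thesis using assms(2) True by (simp add: part_def)
next
  case False
  then consider "length lam < i'" | "i = i'" using assms(3) by linarith
  then show ?thesis by cases (simp_all add: part_eq_0)
qed

lemma len_eq_length: "is_partition lam \<Longrightarrow> len lam = length lam"
proof -
  assume "is_partition lam"
  then have "{i. 1 \<le> i \<and> part lam i \<noteq> 0} = {1..length lam}"
    using part_pos part_eq_0 by (fastforce simp: not_less)
  then show ?thesis by (simp add: len_def)
qed

lemma le_kdiag:
  assumes "is_partition lam" "1 \<le> i" "i \<le> part lam i"
  shows "i \<le> kdiag lam"
proof -
  have "{i. 1 \<le> i \<and> i \<le> part lam i} \<subseteq> {..part lam 1}"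
    using part_antimono[OF assms(1), of 1] by force
  then have "finite {i. 1 \<le> i \<and> i \<le> part lam i}" by (rule finite_subset) simp
  then show ?thesis using assms(2,3) by (simp add: kdiag_def Max_ge)
qed

lemma hook_diagonal_self_conjugate:
  "self_conjugate lam \<Longrightarrow> 1 \<le> i \<Longrightarrow> hook lam i i = 2 * int (part lam i) - 2 * int i + 1"
  by (simp add: hook_def self_conjugate_def)

lemma mem_rim_iff:
  "c \<in> rim lam \<longleftrightarrow>
     1 \<le> fst c \<and> 1 \<le> snd c \<and> snd c \<le> part lam (fst c) \<and> part lam (fst c + 1) \<le> snd c"
  by (cases c) (auto simp: rim_def diagram_def)

lemma L_set_eq_swap_U_set: "L_set p lam = prod.swap ` U_set p lam"
  by (force simp: L_set_def)

lemma U_set_inter_L_set: "U_set p lam \<inter> L_set p lam = {c \<in> U_set p lam. fst c = snd c}"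
  by (auto simp: L_set_eq_swap_U_set U_set_def)

locale nonempty_partition =
  fixes lam :: "nat list"
  assumes is_partition: "is_partition lam" and nonempty: "lam \<noteq> []"
begin

abbreviation width :: nat where "width \<equiv> part lam 1"

definition rim_count :: nat where "rim_count = width + length lam - 1"

definition rim_label :: "nat \<times> nat \<Rightarrow> nat" where
  "rim_label c = width + fst c - snd c"

definition rim_at :: "nat \<Rightarrow> nat \<times> nat" where
  "rim_at = inv_into (rim lam) rim_label"

lemma width_pos: "0 < width"
  using part_pos[OF is_partition, of 1] nonempty by (simp add: Suc_le_eq)

lemma part_le_width: "1 \<le> i \<Longrightarrow> part lam i \<le> width"
  using part_antimono[OF is_partition, of 1 i] by simp

lemma rim_bounds:
  assumes "c \<in> rim lam"
  shows "fst c \<le> length lam" "snd c \<le> width" "1 \<le> rim_label c" "rim_label c \<le> rim_count"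
proof -
  have c: "1 \<le> fst c" "1 \<le> snd c" "snd c \<le> part lam (fst c)"
    using assms by (auto simp: mem_rim_iff)
  show "fst c \<le> length lam" using c part_eq_0[of lam "fst c"] by (cases "length lam < fst c") auto
  show "snd c \<le> width" using c part_le_width[of "fst c"] by linarith
  then show "1 \<le> rim_label c" "rim_label c \<le> rim_count"
    using c \<open>fst c \<le> length lam\<close> by (auto simp: rim_label_def rim_count_def)
qed

lemma rim_label_less_of_row_less:
  assumes "c \<in> rim lam" "d \<in> rim lam" "fst c < fst d"
  shows "rim_label c < rim_label d"
proof -
  have "part lam (fst d) \<le> part lam (fst c + 1)"
    using assms(3) part_antimono[OF is_partition, of "fst c + 1" "fst d"] by simp
  moreover have "snd d \<le> part lam (fst d)" "part lam (fst c + 1) \<le> snd c"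
    using assms(1,2) by (simp_all add: mem_rim_iff)
  ultimately have "snd d \<le> snd c" by linarith
  then show ?thesis using assms rim_bounds[of c] rim_bounds[of d] by (simp add: rim_label_def)
qed

lemma path_before_iff_rim_label_less:
  assumes "c \<in> rim lam" "d \<in> rim lam"
  shows "path_before c d \<longleftrightarrow> rim_label c < rim_label d"
proof (cases "fst c = fst d")
  case True
  then show ?thesis using rim_bounds[OF assms(1)] rim_bounds[OF assms(2)]
    by (auto simp: path_before_def rim_label_def)
next
  case False
  then consider "fst c < fst d" | "fst d < fst c" by linarith
  then show ?thesis
    using rim_label_less_of_row_less[OF assms] rim_label_less_of_row_less[OF assms(2,1)]
    by cases (auto simp: path_before_def)
qed

lemma inj_on_rim_label: "inj_on rim_label (rim lam)"
proof (rule inj_onI)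
  fix c d assume cd: "c \<in> rim lam" "d \<in> rim lam" "rim_label c = rim_label d"
  then have "fst c = fst d"
    using rim_label_less_of_row_less[of c d] rim_label_less_of_row_less[of d c] by fastforce
  then show "c = d" using cd rim_bounds[of c] rim_bounds[of d] by (simp add: rim_label_def prod_eq_iff)
qed

text \<open>Label d is carried by a node of the last row whose head (i, lambda_i) has label at most d.\<close>
lemma rim_label_image: "rim_label ` rim lam = {1..rim_count}"
proof
  show "rim_label ` rim lam \<subseteq> {1..rim_count}" using rim_bounds by auto
  show "{1..rim_count} \<subseteq> rim_label ` rim lam"
  proof
    fix d assume d: "d \<in> {1..rim_count}"
    define I where "I = {i. 1 \<le> i \<and> i \<le> length lam \<and> width + i \<le> d + part lam i}"
    define i where "i = Max I"
    define j where "j = width + i - d"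
    have "1 \<in> I" using d nonempty by (simp add: I_def Suc_le_eq)
    moreover have "finite I" by (simp add: I_def)
    ultimately have i: "i \<in> I" and i_max: "\<And>i'. i' \<in> I \<Longrightarrow> i' \<le> i"
      using Max_in by (auto simp: i_def)
    have "j \<le> part lam i" using i unfolding I_def j_def by auto
    moreover have "1 \<le> j \<and> part lam (i + 1) \<le> j"
    proof (cases "i < length lam")
      case True
      have "i + 1 \<notin> I" using i_max[of "i + 1"] by linarith
      then have "d + part lam (i + 1) < width + i + 1" using True i by (simp add: I_def)
      moreover have "0 < part lam (i + 1)" using True part_pos[OF is_partition] by simp
      ultimately show ?thesis unfolding j_def by linarith
    next
      case False
      then have "i = length lam" using i by (simp add: I_def)
      then show ?thesis using d part_eq_0[of lam "i + 1"] by (auto simp: j_def rim_count_def)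
    qed
    ultimately have "(i, j) \<in> rim lam" using i by (simp add: mem_rim_iff I_def)
    moreover have "rim_label (i, j) = d"
    proof -
      have "d < width + i" using \<open>1 \<le> j \<and> _\<close> unfolding j_def by linarith
      then show ?thesis by (simp add: rim_label_def j_def)
    qed
    ultimately show "d \<in> rim_label ` rim lam" by (metis image_eqI)
  qed
qed

lemma bij_betw_rim_at: "bij_betw rim_at {1..rim_count} (rim lam)"
  unfolding rim_at_def using inj_on_rim_label rim_label_image
  by (metis bij_betw_def bij_betw_inv_into)

lemma rim_label_rim_at: "d \<in> {1..rim_count} \<Longrightarrow> rim_label (rim_at d) = d"
  using rim_label_image by (simp add: rim_at_def f_inv_into_f)

lemma rim_at_rim_label: "c \<in> rim lam \<Longrightarrow> rim_at (rim_label c) = c"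
  using inj_on_rim_label by (simp add: rim_at_def)

lemma rim_list_eq: "rim_list lam = map rim_at [1..<rim_count + 1]"
  unfolding rim_list_def
proof (rule the_equality)
  let ?L = "map rim_at [1..<rim_count + 1]"
  have "sorted_wrt (\<lambda>x y. path_before (rim_at x) (rim_at y)) [1..<rim_count + 1]"
  proof (rule sorted_wrt_mono_rel[OF _ sorted_wrt_upt])
    fix x y assume "x \<in> set [1..<rim_count + 1]" "y \<in> set [1..<rim_count + 1]" "x < y"
    then have "x \<in> {1..rim_count}" "y \<in> {1..rim_count}" "x < y" by auto
    then show "path_before (rim_at x) (rim_at y)"
      using bij_betw_apply[OF bij_betw_rim_at] rim_label_rim_at
        path_before_iff_rim_label_less[of "rim_at x" "rim_at y"] by simp
  qed
  then show "distinct ?L \<and> set ?L = rim lam \<and> sorted_wrt path_before ?L"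
    using bij_betw_rim_at
    by (simp add: distinct_map sorted_wrt_map bij_betw_def atLeastLessThanSuc_atLeastAtMost
        del: upt_Suc)
next
  fix L assume L: "distinct L \<and> set L = rim lam \<and> sorted_wrt path_before L"
  have "sorted_wrt (\<lambda>c d. rim_label c < rim_label d) L"
  proof (rule sorted_wrt_mono_rel[of _ path_before])
    fix c d assume "c \<in> set L" "d \<in> set L" "path_before c d"
    then show "rim_label c < rim_label d" using L path_before_iff_rim_label_less by auto
  qed (use L in simp)
  then have "sorted_wrt (<) (map rim_label L)" by (simp add: sorted_wrt_map)
  then have "sorted (map rim_label L)" "distinct (map rim_label L)"
    by (simp_all add: strict_sorted_iff)
  moreover have "set (map rim_label L) = set [1..<rim_count + 1]"
    using L rim_label_image by auto
  ultimately have "map rim_label L = [1..<rim_count + 1]"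
    by (intro sorted_distinct_set_unique) (simp_all del: upt_Suc)
  moreover have "map rim_at (map rim_label L) = L"
    unfolding map_map by (rule map_idI) (use L rim_at_rim_label in auto)
  ultimately show "L = map rim_at [1..<rim_count + 1]" by metis
qed

lemma rim_size_eq: "rim_size lam = rim_count"
  by (simp add: rim_size_def rim_list_eq)

lemma rim_node_eq: "m \<in> {1..rim_count} \<Longrightarrow> rim_node lam m = rim_at m"
  by (auto simp: rim_node_def rim_list_eq simp del: upt_Suc)

lemma width_le_rim_count: "width \<le> rim_count"
proof -
  have "0 < length lam" using nonempty by simp
  then show ?thesis unfolding rim_count_def by linarith
qed

lemma rim_count_pos: "0 < rim_count"
  using width_pos width_le_rim_count by linarith

lemma row_head_in_rim: "1 \<le> i \<Longrightarrow> i \<le> length lam \<Longrightarrow> (i, part lam i) \<in> rim lam"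
  using part_pos[OF is_partition] part_antimono[OF is_partition, of i "i + 1"]
  by (simp add: mem_rim_iff Suc_le_eq)

lemma least_label_in_row:
  assumes "1 \<le> r" "r \<le> length lam"
  shows "(LEAST m. 1 \<le> m \<and> m \<le> rim_size lam \<and> fst (rim_node lam m) = r) = rim_label (r, part lam r)"
proof (rule Least_equality)
  have head: "(r, part lam r) \<in> rim lam" using row_head_in_rim[OF assms] .
  then show "1 \<le> rim_label (r, part lam r) \<and> rim_label (r, part lam r) \<le> rim_size lam \<and>
      fst (rim_node lam (rim_label (r, part lam r))) = r"
    using rim_bounds[OF head] by (simp add: rim_size_eq rim_node_eq rim_at_rim_label)
next
  fix m assume m: "1 \<le> m \<and> m \<le> rim_size lam \<and> fst (rim_node lam m) = r"
  then have "m \<in> {1..rim_count}" by (simp add: rim_size_eq)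
  then have c: "rim_at m \<in> rim lam" "rim_label (rim_at m) = m" "fst (rim_at m) = r"
    using m bij_betw_apply[OF bij_betw_rim_at] rim_label_rim_at rim_node_eq by auto
  then have "snd (rim_at m) \<le> part lam r" by (simp add: mem_rim_iff)
  then show "rim_label (r, part lam r) \<le> m"
    using c rim_bounds(2)[OF c(1)] part_le_width[OF assms(1)] by (simp add: rim_label_def)
qed

lemma rim_at_upper_iff:
  assumes "d \<in> {1..rim_count}"
  shows "fst (rim_at d) \<le> snd (rim_at d) \<longleftrightarrow> d \<le> width"
    and "fst (rim_at d) = snd (rim_at d) \<longleftrightarrow> d = width"
proof -
  have c: "rim_at d \<in> rim lam" "rim_label (rim_at d) = d"
    using assms bij_betw_apply[OF bij_betw_rim_at] rim_label_rim_at by auto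
  then show "fst (rim_at d) \<le> snd (rim_at d) \<longleftrightarrow> d \<le> width"
    and "fst (rim_at d) = snd (rim_at d) \<longleftrightarrow> d = width"
    using rim_bounds(2)[OF c(1)] by (auto simp: rim_label_def)
qed

section \<open>The p-segments of the rim\<close>

context
  fixes p :: nat
  assumes p_pos: "0 < p"
begin

definition seg_continues :: "nat \<Rightarrow> bool" where
  "seg_continues s \<longleftrightarrow> fst (rim_node lam (seg_end p lam s)) < len lam"

definition next_seg_start :: "nat \<Rightarrow> nat" where
  "next_seg_start s = (LEAST m. 1 \<le> m \<and> m \<le> rim_size lam \<and>
     fst (rim_node lam m) = fst (rim_node lam (seg_end p lam s)) + 1)"

lemma seg_start_next: "seg_start p lam s \<Longrightarrow> seg_continues s \<Longrightarrow> seg_start p lam (next_seg_start s)"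
  unfolding seg_continues_def next_seg_start_def by (rule seg_start.step)

lemma seg_end_bounds:
  assumes "s \<in> {1..rim_count}"
  shows "s \<le> seg_end p lam s" "seg_end p lam s \<in> {1..rim_count}"
  using assms p_pos by (auto simp: seg_end_def rim_size_eq)

lemma next_seg_start_row_head:
  assumes "s \<in> {1..rim_count}" "seg_continues s"
  defines "r \<equiv> fst (rim_at (seg_end p lam s)) + 1"
  shows "1 \<le> r" "r \<le> length lam" "next_seg_start s = rim_label (r, part lam r)"
    and "seg_end p lam s < next_seg_start s"
proof -
  have e: "seg_end p lam s \<in> {1..rim_count}" using seg_end_bounds[OF assms(1)] by simp
  then have "rim_node lam (seg_end p lam s) = rim_at (seg_end p lam s)" by (rule rim_node_eq)
  then show r: "1 \<le> r" "r \<le> length lam"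
    using assms(2) len_eq_length[OF is_partition] by (simp_all add: r_def seg_continues_def)
  show next_eq: "next_seg_start s = rim_label (r, part lam r)"
    using least_label_in_row[OF r] \<open>rim_node lam _ = _\<close> by (simp add: next_seg_start_def r_def)
  have "rim_at (seg_end p lam s) \<in> rim lam" using bij_betw_apply[OF bij_betw_rim_at e] .
  then have "rim_label (rim_at (seg_end p lam s)) < rim_label (r, part lam r)"
    using row_head_in_rim[OF r] by (intro rim_label_less_of_row_less) (simp_all add: r_def)
  then show "seg_end p lam s < next_seg_start s" using next_eq rim_label_rim_at[OF e] by simp
qed

lemma seg_start_row_head:
  "seg_start p lam s \<Longrightarrow> \<exists>i. 1 \<le> i \<and> i \<le> length lam \<and> s = rim_label (i, part lam i)"
proof (induction rule: seg_start.induct)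
  case first
  show ?case using nonempty width_pos by (intro exI[of _ 1]) (simp add: rim_label_def Suc_le_eq)
next
  case (step s)
  then obtain i where i: "1 \<le> i" "i \<le> length lam" "s = rim_label (i, part lam i)" by blast
  then have "s \<in> {1..rim_count}" using rim_bounds row_head_in_rim by simp
  then show ?case
    using next_seg_start_row_head step(2)
    unfolding seg_continues_def next_seg_start_def by blast
qed

lemma seg_start_bounds: "seg_start p lam s \<Longrightarrow> s \<in> {1..rim_count}"
  using seg_start_row_head rim_bounds row_head_in_rim by fastforce

text \<open>Rule induction alone cannot exclude a segment start inside an earlier segment; along the
  orbit of 1 under next_seg_start the starts increase together with their segments.\<close>
lemma seg_start_iff_orbit:
  "seg_start p lam s \<longleftrightarrow>
     (\<exists>k. s = (next_seg_start ^^ k) 1 \<and> (\<forall>j<k. seg_continues ((next_seg_start ^^ j) 1)))"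
proof
  assume "seg_start p lam s"
  then show "\<exists>k. s = (next_seg_start ^^ k) 1 \<and> (\<forall>j<k. seg_continues ((next_seg_start ^^ j) 1))"
  proof (induction rule: seg_start.induct)
    case first
    then show ?case by (intro exI[of _ 0]) simp
  next
    case (step s)
    then obtain k where k: "s = (next_seg_start ^^ k) 1" "\<forall>j<k. seg_continues ((next_seg_start ^^ j) 1)"
      by blast
    then show ?case
      using step(2) unfolding next_seg_start_def[symmetric] seg_continues_def[symmetric]
      by (intro exI[of _ "Suc k"]) (auto simp: less_Suc_eq)
  qed
next
  assume "\<exists>k. s = (next_seg_start ^^ k) 1 \<and> (\<forall>j<k. seg_continues ((next_seg_start ^^ j) 1))"
  then obtain k where "s = (next_seg_start ^^ k) 1" "\<forall>j<k. seg_continues ((next_seg_start ^^ j) 1)"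
    by blast
  then show "seg_start p lam s"
  proof (induction k arbitrary: s)
    case 0
    then show ?case using seg_start.first rim_count_pos by (simp add: rim_size_eq)
  next
    case (Suc k)
    then show ?case using seg_start_next by simp
  qed
qed

lemma seg_end_less_orbit:
  assumes "\<forall>j<k. seg_continues ((next_seg_start ^^ j) 1)" "i < k"
  shows "seg_end p lam ((next_seg_start ^^ i) 1) < (next_seg_start ^^ k) 1"
  using assms
proof (induction k)
  case 0
  then show ?case by simp
next
  case (Suc k)
  let ?s = "(next_seg_start ^^ k) 1"
  have "seg_start p lam ?s" using Suc.prems(1) by (auto simp: seg_start_iff_orbit)
  then have s: "?s \<in> {1..rim_count}" "seg_continues ?s" using Suc.prems(1) seg_start_bounds by auto
  then have "seg_end p lam ?s < next_seg_start ?s" by (rule next_seg_start_row_head(4))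
  moreover have "seg_end p lam ((next_seg_start ^^ i) 1) \<le> seg_end p lam ?s" if "i < k"
    using Suc.IH[OF _ that] Suc.prems(1) seg_end_bounds(1)[OF s(1)] by simp
  ultimately show ?case using Suc.prems(2) by (auto simp: less_Suc_eq)
qed

lemma seg_starts_disjoint:
  assumes "seg_start p lam s" "seg_start p lam t" "s < t"
  shows "seg_end p lam s < t"
proof -
  obtain j where j: "s = (next_seg_start ^^ j) 1" "\<forall>i<j. seg_continues ((next_seg_start ^^ i) 1)"
    using assms(1) seg_start_iff_orbit by blast
  obtain k where k: "t = (next_seg_start ^^ k) 1" "\<forall>i<k. seg_continues ((next_seg_start ^^ i) 1)"
    using assms(2) seg_start_iff_orbit by blast
  consider "j < k" | "k < j" using assms(3) j(1) k(1) by (metis nat_neq_iff)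
  then show ?thesis
  proof cases
    case 1
    then show ?thesis using seg_end_less_orbit[OF k(2)] j(1) k(1) by simp
  next
    case 2
    then have "seg_end p lam t < s" using seg_end_less_orbit[OF j(2)] j(1) k(1) by simp
    then show ?thesis using seg_end_bounds(1)[OF seg_start_bounds[OF assms(2)]] assms(3) by simp
  qed
qed

lemma seg_length_if_not_last:
  "seg_start p lam s \<Longrightarrow> seg_end p lam s < rim_count \<Longrightarrow> seg_end p lam s + 1 - s = p"
  using p_pos seg_start_bounds by (auto simp: seg_end_def rim_size_eq min_def split: if_splits)

definition seg_labels :: "nat set" where
  "seg_labels = (\<Union>s\<in>{s. seg_start p lam s}. {s..seg_end p lam s})"

lemma seg_labels_subset: "seg_labels \<subseteq> {1..rim_count}"
  using seg_start_bounds seg_end_bounds by (fastforce simp: seg_labels_def)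

lemma p_rim_eq: "p_rim p lam = rim_at ` seg_labels"
proof -
  have "{m. \<exists>s. seg_start p lam s \<and> s \<le> m \<and> m \<le> seg_end p lam s} = seg_labels"
    by (auto simp: seg_labels_def)
  then have "p_rim p lam = rim_node lam ` seg_labels"
    unfolding p_rim_def by blast
  also have "\<dots> = rim_at ` seg_labels" using seg_labels_subset rim_node_eq by (intro image_cong) auto
  finally show ?thesis .
qed

lemma card_seg_labels_upto_mod:
  assumes "x \<le> rim_count"
  shows "seg_start p lam s \<Longrightarrow> s \<le> x \<Longrightarrow> x \<le> seg_end p lam s \<Longrightarrow>
           card (seg_labels \<inter> {..x}) mod p = (x + 1 - s) mod p"
    and "x \<notin> seg_labels \<Longrightarrow> card (seg_labels \<inter> {..x}) mod p = 0"
proof -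
  note segments = card_segments_upto_mod[of "{s. seg_start p lam s}" "seg_end p lam" rim_count p x,
      folded seg_labels_def, OF _ _ assms]
  show "seg_start p lam s \<Longrightarrow> s \<le> x \<Longrightarrow> x \<le> seg_end p lam s \<Longrightarrow>
           card (seg_labels \<inter> {..x}) mod p = (x + 1 - s) mod p"
    using segments seg_starts_disjoint seg_length_if_not_last by blast
  show "x \<notin> seg_labels \<Longrightarrow> card (seg_labels \<inter> {..x}) mod p = 0"
    using segments seg_starts_disjoint seg_length_if_not_last by (auto simp: seg_labels_def)
qed

section \<open>The p-rim* and the diagonal\<close>

lemma U_set_eq: "U_set p lam = rim_at ` (seg_labels \<inter> {..width})"
proof -
  have "U_set p lam = {c \<in> rim_at ` seg_labels. fst c \<le> snd c}"
    unfolding U_set_def p_rim_eq by (simp add: case_prod_unfold)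
  also have "\<dots> = rim_at ` {d \<in> seg_labels. fst (rim_at d) \<le> snd (rim_at d)}" by blast
  also have "{d \<in> seg_labels. fst (rim_at d) \<le> snd (rim_at d)} = seg_labels \<inter> {..width}"
    using seg_labels_subset rim_at_upper_iff(1) by auto
  finally show ?thesis .
qed

lemma card_U_set: "card (U_set p lam) = card (seg_labels \<inter> {..width})"
  unfolding U_set_eq using seg_labels_subset
  by (intro card_image inj_on_subset[OF bij_betw_imp_inj_on[OF bij_betw_rim_at]]) auto

lemma diagonal_U_set: "{c \<in> U_set p lam. fst c = snd c} = rim_at ` (seg_labels \<inter> {width})"
proof -
  have "{c \<in> U_set p lam. fst c = snd c} =
      rim_at ` {d \<in> seg_labels \<inter> {..width}. fst (rim_at d) = snd (rim_at d)}"
    unfolding U_set_eq by blast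
  also have "{d \<in> seg_labels \<inter> {..width}. fst (rim_at d) = snd (rim_at d)} = seg_labels \<inter> {width}"
    using seg_labels_subset rim_at_upper_iff(2) by auto
  finally show ?thesis .
qed

lemma a_star_eq:
  "a_star p lam + (if width \<in> seg_labels then 1 else 0) = 2 * card (seg_labels \<inter> {..width})"
proof -
  have fin: "finite (U_set p lam)" "finite (L_set p lam)"
    by (simp_all add: U_set_eq L_set_eq_swap_U_set)
  have "card (L_set p lam) = card (U_set p lam)"
    unfolding L_set_eq_swap_U_set by (simp add: card_image)
  moreover have "card (U_set p lam \<inter> L_set p lam) = (if width \<in> seg_labels then 1 else 0)"
    unfolding U_set_inter_L_set diagonal_U_set by auto
  ultimately show ?thesis
    using card_Un_Int[OF fin] card_U_set by (simp add: a_star_def rim_star_def)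
qed

lemma diagonal_mem_rim_star_iff: "(\<exists>i. (i, i) \<in> rim_star p lam) \<longleftrightarrow> width \<in> seg_labels"
proof -
  have "(\<exists>i. (i, i) \<in> rim_star p lam) \<longleftrightarrow> {c \<in> U_set p lam. fst c = snd c} \<noteq> {}"
    by (auto simp: rim_star_def L_set_def)
  then show ?thesis unfolding diagonal_U_set by auto
qed

lemma dvd_a_star_iff_dvd_diagonal_hook:
  assumes "self_conjugate lam" "width \<in> seg_labels"
  obtains i where "1 \<le> i" "i \<le> kdiag lam" "p dvd a_star p lam \<longleftrightarrow> int p dvd hook lam i i"
proof -
  obtain s where s: "seg_start p lam s" "s \<le> width" "width \<le> seg_end p lam s"
    using assms(2) by (auto simp: seg_labels_def)
  obtain i where i: "1 \<le> i" "i \<le> length lam" "s = rim_label (i, part lam i)"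
    using seg_start_row_head[OF s(1)] by blast
  have "part lam i \<le> width" using part_le_width[OF i(1)] .
  then have diag: "i \<le> part lam i" and width_s: "width + 1 - s = part lam i - i + 1"
    using s(2) i(3) by (auto simp: rim_label_def)
  define C where "C = card (seg_labels \<inter> {..width})"
  have "C mod p = (part lam i - i + 1) mod p"
    using card_seg_labels_upto_mod(1)[OF width_le_rim_count s] width_s by (simp add: C_def)
  then have "int p dvd int C - int (part lam i - i + 1)"
    by (metis mod_eq_dvd_iff of_nat_mod)
  then have "int p dvd 2 * (int C - int (part lam i - i + 1))" by (rule dvd_mult)
  moreover have "int (a_star p lam) - hook lam i i = 2 * (int C - int (part lam i - i + 1))"
    using a_star_eq assms(2) diag hook_diagonal_self_conjugate[OF assms(1) i(1)]
    by (simp add: C_def of_nat_diff)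
  ultimately have "int p dvd int (a_star p lam) - hook lam i i" by simp
  from dvd_add_right_iff[OF this, of "hook lam i i"]
  have "p dvd a_star p lam \<longleftrightarrow> int p dvd hook lam i i" by simp
  then show ?thesis using that i(1) le_kdiag[OF is_partition i(1) diag] by simp
qed

end

end

theorem corollary3p21:
  fixes p :: nat and lam :: "nat list"
  assumes "prime p" and "odd p"
    and "BG_partition p lam" and "lam \<noteq> []"
  shows "(eps_star p lam = 0 \<longleftrightarrow> even (a_star p lam))
       \<and> (even (a_star p lam) \<longleftrightarrow> (\<forall>i. (i, i) \<notin> rim_star p lam))
       \<and> ((\<forall>i. (i, i) \<notin> rim_star p lam) \<longleftrightarrow> p dvd a_star p lam)"
proof -
  have partition: "is_partition lam" and sc: "self_conjugate lam"
    and hooks: "\<And>i. 1 \<le> i \<Longrightarrow> i \<le> kdiag lam \<Longrightarrow> \<not> int p dvd hook lam i i"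
    using assms(3) by (auto simp: BG_partition_def)
  interpret nonempty_partition lam using partition assms(4) by unfold_locales
  have p: "0 < p" using assms(1) by (simp add: prime_gt_0_nat)
  note a_star = a_star_eq[OF p] and diagonal = diagonal_mem_rim_star_iff[OF p]
  show ?thesis
  proof (cases "width \<in> seg_labels p")
    case True
    obtain i where "1 \<le> i" "i \<le> kdiag lam" "p dvd a_star p lam \<longleftrightarrow> int p dvd hook lam i i"
      using dvd_a_star_iff_dvd_diagonal_hook[OF p sc True] .
    then have "\<not> p dvd a_star p lam" using hooks by blast
    moreover have "odd (a_star p lam)" using a_star True by presburger
    ultimately show ?thesis using True diagonal by (auto simp: eps_star_def odd_iff_mod_2_eq_one)
  next
    case False
    then have "a_star p lam = 2 * card (seg_labels p \<inter> {..width})"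
      and "p dvd card (seg_labels p \<inter> {..width})"
      using a_star card_seg_labels_upto_mod(2)[OF p width_le_rim_count False] by auto
    then show ?thesis using False diagonal by (auto simp: eps_star_def)
  qed
qed

end
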